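(* Let $\ell,\ell'$ be nondegenerate Hermitian forms on complex $n$-dimensional spaces $W,W'$, and let $A:W\to W$, $A':W'\to W'$ be nonsingular antilinear operators that are $\ell$-self-adjoint and $\ell'$-self-adjoint respectively. If the pairs $(\ell,A^2)$ and $(\ell',A'^2)$ are equivalent (i.e. there is a linear isomorphism $\varphi:W\to W'$ with $\ell'(\varphi v,\varphi w)=\ell(v,w)$ and $\varphi A^2=A'^2\varphi$; equivalently they have the same Gohberg--Lancaster--Rodman canonical form), then $(\ell,A)$ and $(\ell',A')$ are equivalent (there is a linear isomorphism $\psi:W\to W'$ with $\ell'(\psi v,\psi w)=\ell(v,w)$ and $\psi A=A'\psi$). In other words, for nonsingular $A$ the canonical form of $(\ell,A)$ given by the simultaneous canonical form theorem is determined by the canonical form of the pair $(\ell,A^2)$.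
   Context: An antilinear operator satisfies $A(zv+w)=\bar z Av+Aw$. Hermitian forms are linear in the first argument and conjugate-linear in the second. $A$ is $\ell$-self-adjoint if $\ell(Av,w)=\ell(Aw,v)$ for all $v,w$; then $A^2$ is a linear $\ell$-self-adjoint operator (i.e. $\ell(A^2v,w)=\ell(v,A^2w)$). The Gohberg--Lancaster--Rodman canonical form classifies pairs (nondegenerate Hermitian form, self-adjoint linear operator) up to simultaneous change of basis. *)

theory Defs
  imports "HOL-Analysis.Analysis"
begin

text \<open>Complex n-dimensional spaces are modelled as complex ^ 'n (n = CARD('n)).\<close>

definition clinear_map :: "(complex ^ 'n \<Rightarrow> complex ^ 'm) \<Rightarrow> bool" where
  "clinear_map f \<longleftrightarrow> Vector_Spaces.linear (*s) (*s) f"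

definition antilinear_map :: "(complex ^ 'n \<Rightarrow> complex ^ 'n) \<Rightarrow> bool" where
  "antilinear_map A \<longleftrightarrow> (\<forall>z v w. A (z *s v + w) = cnj z *s A v + A w)"

definition hermitian_form :: "(complex ^ 'n \<Rightarrow> complex ^ 'n \<Rightarrow> complex) \<Rightarrow> bool" where
  "hermitian_form l \<longleftrightarrow>
     (\<forall>z u v w. l (z *s u + v) w = z * l u w + l v w) \<and>
     (\<forall>z u v w. l w (z *s u + v) = cnj z * l w u + l w v) \<and>
     (\<forall>v w. l w v = cnj (l v w))"

definition nondegenerate :: "(complex ^ 'n \<Rightarrow> complex ^ 'n \<Rightarrow> complex) \<Rightarrow> bool" where
  "nondegenerate l \<longleftrightarrow> (\<forall>v. (\<forall>w. l v w = 0) \<longrightarrow> v = 0)"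

definition l_self_adjoint_anti ::
  "(complex ^ 'n \<Rightarrow> complex ^ 'n \<Rightarrow> complex) \<Rightarrow> (complex ^ 'n \<Rightarrow> complex ^ 'n) \<Rightarrow> bool" where
  "l_self_adjoint_anti l A \<longleftrightarrow> (\<forall>v w. l (A v) w = l (A w) v)"

definition nonsingular :: "(complex ^ 'n \<Rightarrow> complex ^ 'n) \<Rightarrow> bool" where
  "nonsingular A \<longleftrightarrow> (\<forall>v. A v = 0 \<longrightarrow> v = 0)"

definition pair_equiv ::
  "(complex ^ 'n \<Rightarrow> complex ^ 'n \<Rightarrow> complex) \<Rightarrow> (complex ^ 'n \<Rightarrow> complex ^ 'n) \<Rightarrow>
   (complex ^ 'm \<Rightarrow> complex ^ 'm \<Rightarrow> complex) \<Rightarrow> (complex ^ 'm \<Rightarrow> complex ^ 'm) \<Rightarrow> bool" where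
  "pair_equiv l B l' B' \<longleftrightarrow>
     (\<exists>\<phi>. clinear_map \<phi> \<and> bij \<phi> \<and>
          (\<forall>v w. l' (\<phi> v) (\<phi> w) = l v w) \<and> (\<forall>v. \<phi> (B v) = B' (\<phi> v)))"

end

theory Submission
  imports Defs "HOL-Computational_Algebra.Fundamental_Theorem_Algebra"
begin

(* Transporting A' back along the equivalence of the squares gives a second l-self-adjoint
   antilinear operator C on W with C^2 = A^2, so it suffices to find an l-unitary linear G
   with C G = G A. The operator U = C A^-1 is l-unitary and satisfies U A U = A. Let G = g(U),
   where the polynomial g interpolates the principal square root, to the order of the
   multiplicities, at the eigenvalues z of U and at 1/conj z. Then G^2 = U, and with
   H = (conj g)(U^-1) we get G A = A H, so E = H G is an involution commuting with U.
   On an eigenvector with eigenvalue z, E acts as conj(sqrt(1/conj z)) sqrt z = 1; an involution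
   that fixes all eigenvectors of U and commutes with U is the identity. Hence H G = 1: since H
   is the l-adjoint of G, G is l-unitary, and G A G = A H G = A, so C G = U A G = G A. *)

lemma clinear_iff:
  "clinear_map f \<longleftrightarrow> (\<forall>x y. f (x + y) = f x + f y) \<and> (\<forall>c x. f (c *s x) = c *s f x)"
  unfolding clinear_map_def Vector_Spaces.linear_iff by (auto intro: vec.vector_space_axioms)

lemma clinear_add: "clinear_map f \<Longrightarrow> f (x + y) = f x + f y"
  by (simp add: clinear_iff)

lemma clinear_scale: "clinear_map f \<Longrightarrow> f (c *s x) = c *s f x"
  by (simp add: clinear_iff)

lemma clinear_0: "clinear_map f \<Longrightarrow> f 0 = 0"
  by (metis clinear_scale vector_smult_lzero)

lemma clinear_diff: "clinear_map f \<Longrightarrow> f (x - y) = f x - f y"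
  by (metis add_diff_cancel clinear_add diff_add_cancel)

lemma clinear_sum: "clinear_map f \<Longrightarrow> f (sum g S) = (\<Sum>i\<in>S. f (g i))"
  by (induction S rule: infinite_finite_induct) (auto simp: clinear_0 clinear_add)

lemma clinear_comp: "clinear_map f \<Longrightarrow> clinear_map g \<Longrightarrow> clinear_map (\<lambda>v. f (g v))"
  by (simp add: clinear_iff)

lemma clinear_inj_imp_bij:
  fixes f :: "complex^'n \<Rightarrow> complex^'n"
  shows "clinear_map f \<Longrightarrow> inj f \<Longrightarrow> bij f"
  unfolding clinear_map_def bij_def using vec.linear_inj_imp_surj by blast

lemma clinear_inv:
  assumes f: "clinear_map f" and "bij f"
  shows "clinear_map (inv f)"
proof -
  have ff: "f (inv f y) = y" for y using \<open>bij f\<close> by (simp add: bij_is_surj surj_f_inv_f)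
  have fi: "inv f (f x) = x" for x using \<open>bij f\<close> by (simp add: bij_is_inj inv_f_f)
  show ?thesis unfolding clinear_iff
  proof (intro conjI allI)
    fix x y
    have "f (inv f (x + y)) = f (inv f x + inv f y)" by (simp add: ff clinear_add[OF f])
    then show "inv f (x + y) = inv f x + inv f y" by (metis fi)
  next
    fix c x
    have "f (inv f (c *s x)) = f (c *s inv f x)" by (simp add: ff clinear_scale[OF f])
    then show "inv f (c *s x) = c *s inv f x" by (metis fi)
  qed
qed

lemma antilinear_add: "antilinear_map A \<Longrightarrow> A (v + w) = A v + A w"
  unfolding antilinear_map_def by (metis complex_cnj_one vector_smult_lid)

lemma antilinear_0: "antilinear_map A \<Longrightarrow> A 0 = 0"
  using antilinear_add[of A 0 0] by simp

lemma antilinear_scale: "antilinear_map A \<Longrightarrow> A (z *s v) = cnj z *s A v"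
  using antilinear_0[of A] unfolding antilinear_map_def by (metis add.right_neutral)

lemma antilinear_imp_linear: "antilinear_map A \<Longrightarrow> linear A"
proof (rule linearI)
  fix r :: real and v
  assume "antilinear_map A"
  have scaleR: "r *\<^sub>R w = complex_of_real r *s w" for w :: "complex^'n"
    by (simp add: vec_eq_iff scaleR_conv_of_real[where 'a = complex])
  show "A (r *\<^sub>R v) = r *\<^sub>R A v"
    by (simp only: scaleR antilinear_scale[OF \<open>antilinear_map A\<close>] complex_cnj_complex_of_real)
qed (rule antilinear_add)

lemma antilinear_inj_imp_bij: "antilinear_map A \<Longrightarrow> inj A \<Longrightarrow> bij A"
  by (simp add: antilinear_imp_linear bij_def linear_inj_imp_surj)

lemma antilinear_nonsingular_imp_inj:
  assumes A: "antilinear_map A" and "nonsingular A"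
  shows "inj A"
proof (rule injI)
  fix v w assume "A v = A w"
  then have "A (v - w) = 0" by (simp add: linear_diff[OF antilinear_imp_linear[OF A]])
  then have "v - w = 0" using \<open>nonsingular A\<close> unfolding nonsingular_def by blast
  then show "v = w" by simp
qed

lemma antilinear_inv:
  assumes f: "antilinear_map f" and "bij f"
  shows "antilinear_map (inv f)"
proof -
  have ff: "f (inv f v) = v" and fi: "inv f (f v) = v" for v
    using \<open>bij f\<close> by (simp_all add: bij_is_surj surj_f_inv_f bij_is_inj inv_f_f)
  show ?thesis unfolding antilinear_map_def
  proof (intro allI)
    fix z v w
    have "f (inv f (z *s v + w)) = f (cnj z *s inv f v + inv f w)"
      by (simp add: ff antilinear_add[OF f] antilinear_scale[OF f])
    then show "inv f (z *s v + w) = cnj z *s inv f v + inv f w" by (metis fi)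
  qed
qed

lemma hermitian_form_left: "hermitian_form l \<Longrightarrow> l (z *s u + v) w = z * l u w + l v w"
  unfolding hermitian_form_def by blast

lemma hermitian_form_right: "hermitian_form l \<Longrightarrow> l w (z *s u + v) = cnj z * l w u + l w v"
  unfolding hermitian_form_def by blast

lemma hermitian_form_zero_left: "hermitian_form l \<Longrightarrow> l 0 w = 0"
  using hermitian_form_left[of l 1 0 0 w] by simp

lemma hermitian_form_zero_right: "hermitian_form l \<Longrightarrow> l w 0 = 0"
  using hermitian_form_right[of l w 1 0 0] by simp

definition poly_op :: "complex poly \<Rightarrow> (complex^'n \<Rightarrow> complex^'n) \<Rightarrow> complex^'n \<Rightarrow> complex^'n"
  where "poly_op p X = fold_coeffs (\<lambda>a f v. a *s v + X (f v)) p (\<lambda>v. 0)"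

lemma poly_op_0 [simp]: "poly_op 0 X = (\<lambda>v. 0)"
  by (simp add: poly_op_def)

lemma poly_op_pCons:
  assumes "clinear_map X"
  shows "poly_op (pCons a p) X = (\<lambda>v. a *s v + X (poly_op p X v))"
proof (cases "p = 0 \<and> a = 0")
  case True
  then show ?thesis using assms by (simp add: clinear_0)
next
  case False
  then show ?thesis
    by (auto simp: poly_op_def fold_coeffs_pCons_not_0_0_eq fold_coeffs_pCons_coeff_not_0_eq)
qed

lemma poly_op_1: "clinear_map X \<Longrightarrow> poly_op 1 X v = v"
  by (simp add: one_pCons poly_op_pCons clinear_0)

lemma poly_op_X: "clinear_map X \<Longrightarrow> poly_op [:0, 1:] X v = X v"
  by (simp add: poly_op_pCons clinear_0)

lemma poly_op_clinear: "clinear_map X \<Longrightarrow> clinear_map (poly_op p X)"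
proof (induction p rule: pCons_induct)
  case 0
  then show ?case by (simp add: clinear_iff)
next
  case (pCons a p)
  then show ?case
    by (auto simp: clinear_iff poly_op_pCons vector_add_ldistrib vector_smult_assoc mult.commute)
qed

lemma poly_op_add: "clinear_map X \<Longrightarrow> poly_op (p + q) X v = poly_op p X v + poly_op q X v"
proof (induction p arbitrary: q v rule: pCons_induct)
  case 0
  then show ?case by simp
next
  case (pCons a p)
  obtain b q' where q: "q = pCons b q'" by (cases q)
  have "poly_op (p + q') X v = poly_op p X v + poly_op q' X v" for v using pCons by blast
  then show ?case
    using pCons.prems by (simp add: q poly_op_pCons clinear_add vector_sadd_rdistrib add_ac)
qed

lemma poly_op_smult: "clinear_map X \<Longrightarrow> poly_op (smult c p) X v = c *s poly_op p X v"
  by (induction p arbitrary: v rule: pCons_induct)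
    (simp_all add: poly_op_pCons clinear_scale vector_add_ldistrib vector_smult_assoc)

lemma poly_op_mult: "clinear_map X \<Longrightarrow> poly_op (p * q) X v = poly_op p X (poly_op q X v)"
  by (induction p arbitrary: v rule: pCons_induct)
    (simp_all add: poly_op_pCons poly_op_add poly_op_smult mult_pCons_left clinear_0)

lemma poly_op_diff: "clinear_map X \<Longrightarrow> poly_op (p - q) X v = poly_op p X v - poly_op q X v"
  by (metis add_diff_cancel diff_add_cancel poly_op_add)

lemma poly_op_sum: "clinear_map X \<Longrightarrow> poly_op (\<Sum>i\<in>S. f i) X v = (\<Sum>i\<in>S. poly_op (f i) X v)"
  by (induction S rule: infinite_finite_induct) (auto simp: poly_op_add)

lemma poly_op_monom: "clinear_map X \<Longrightarrow> poly_op (monom c i) X v = c *s (X ^^ i) v"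
  by (induction i arbitrary: v)
    (simp_all add: monom_0 monom_Suc poly_op_pCons clinear_scale clinear_0 funpow_swap1)

lemma poly_op_commute:
  assumes "clinear_map X" "clinear_map Y" "\<And>v. Y (X v) = X (Y v)"
  shows "poly_op p X (Y v) = Y (poly_op p X v)"
  using assms
  by (induction p arbitrary: v rule: pCons_induct)
    (simp_all add: poly_op_pCons clinear_0 clinear_add clinear_scale)

lemma poly_op_eigenvector:
  assumes "clinear_map X" "X v = z *s v"
  shows "poly_op p X v = poly p z *s v"
  using assms
  by (induction p rule: pCons_induct)
    (simp_all add: poly_op_pCons clinear_scale vector_smult_assoc vector_sadd_rdistrib algebra_simps)

lemma poly_op_eq_0_if_dvd:
  assumes X: "clinear_map X" and "q dvd p" and "\<And>v. poly_op q X v = 0"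
  shows "poly_op p X v = 0"
proof -
  from \<open>q dvd p\<close> obtain k where "p = k * q" by (metis dvd_def mult.commute)
  then show ?thesis using assms by (simp add: poly_op_mult poly_op_clinear clinear_0)
qed

lemma hermitian_form_poly_op_adjoint:
  assumes herm: "hermitian_form l" and X: "clinear_map X" and Xi: "clinear_map Xi"
    and XXi: "\<And>v. X (Xi v) = v" and unitary: "\<And>v w. l (X v) (X w) = l v w"
  shows "l (poly_op p X v) w = l v (poly_op (map_poly cnj p) Xi w)"
proof (induction p arbitrary: v w rule: pCons_induct)
  case 0
  then show ?case by (simp add: hermitian_form_zero_left[OF herm] hermitian_form_zero_right[OF herm])
next
  case (pCons a p)
  have X_adjoint: "l (X y) u = l y (Xi u)" for y u using unitary[of y "Xi u"] by (simp add: XXi)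
  have "l (poly_op (pCons a p) X v) w = a * l v w + l (X (poly_op p X v)) w"
    by (simp add: poly_op_pCons[OF X] hermitian_form_left[OF herm])
  also have "\<dots> = a * l v w + l v (poly_op (map_poly cnj p) Xi (Xi w))"
    by (simp add: X_adjoint pCons.IH)
  also have "poly_op (map_poly cnj p) Xi (Xi w) = Xi (poly_op (map_poly cnj p) Xi w)"
    by (rule poly_op_commute[OF Xi Xi]) simp
  also have "a * l v w + l v (Xi (poly_op (map_poly cnj p) Xi w))
      = l v (poly_op (map_poly cnj (pCons a p)) Xi w)"
    by (simp add: map_poly_pCons poly_op_pCons[OF Xi] hermitian_form_right[OF herm])
  finally show ?case .
qed

lemma poly_op_antilinear_intertwine:
  assumes A: "antilinear_map A" and X: "clinear_map X" and Y: "clinear_map Y"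
    and XA: "\<And>u. X (A u) = A (Y u)"
  shows "poly_op p X (A v) = A (poly_op (map_poly cnj p) Y v)"
  by (induction p arbitrary: v rule: pCons_induct)
    (simp_all add: A antilinear_0 poly_op_pCons[OF X] poly_op_pCons[OF Y] map_poly_pCons
      antilinear_add[OF A] antilinear_scale[OF A] XA)

abbreviation root_poly :: "complex list \<Rightarrow> complex poly"
  where "root_poly L \<equiv> (\<Prod>z\<leftarrow>L. [:-z, 1:])"

lemma poly_root_poly_eq_0_iff: "poly (root_poly L) x = 0 \<longleftrightarrow> x \<in> set L"
  by (induction L) auto

lemma complex_poly_eq_smult_root_poly:
  fixes p :: "complex poly"
  assumes "p \<noteq> 0"
  obtains c L where "c \<noteq> 0" "p = smult c (root_poly L)"
proof -
  obtain L where L: "mset L = proots p"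
    using ex_mset by blast
  have "p = smult (lead_coeff p) (\<Prod>x\<in>#proots p. [:-x, 1:])"
    by (rule complex_poly_decompose_multiset [symmetric])
  also have "(\<Prod>x\<in>#proots p. [:-x, 1:]) = root_poly L"
    by (subst prod_mset_prod_list [symmetric]) (simp add: L)
  finally show ?thesis using assms by (intro that[of "lead_coeff p" L]) simp_all
qed

lemma euclidean_family_dependent:
  fixes f :: "nat \<Rightarrow> 'a::euclidean_space"
  obtains c where "\<exists>i\<le>DIM('a). c i \<noteq> 0" "(\<Sum>i\<le>DIM('a). c i *\<^sub>R f i) = 0"
proof -
  define D where "D = DIM('a)"
  have "\<exists>c. (\<exists>i\<le>D. c i \<noteq> 0) \<and> (\<Sum>i\<le>D. c i *\<^sub>R f i) = 0"
  proof (cases "inj_on f {..D}")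
    case True
    then have "dependent (f ` {..D})"
      using independent_bound by (fastforce simp: card_image D_def)
    then obtain u where u: "\<exists>v\<in>f ` {..D}. u v \<noteq> 0" "(\<Sum>v\<in>f ` {..D}. u v *\<^sub>R v) = 0"
      using real_vector.dependent_finite[of "f ` {..D}"] by auto
    have "(\<Sum>i\<le>D. u (f i) *\<^sub>R f i) = (\<Sum>v\<in>f ` {..D}. u v *\<^sub>R v)"
      using True by (simp add: sum.reindex)
    then show ?thesis using u by (intro exI[of _ "\<lambda>i. u (f i)"]) auto
  next
    case False
    then obtain i j where ij: "i \<le> D" "j \<le> D" "i \<noteq> j" "f i = f j"
      unfolding inj_on_def by auto
    define c where "c k = (if k = i then 1 else if k = j then -1 else (0::real))" for k
    have "(\<Sum>k\<le>D. c k *\<^sub>R f k) = (\<Sum>k\<in>{i,j}. c k *\<^sub>R f k)"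
      by (rule sum.mono_neutral_right) (auto simp: c_def ij)
    also have "\<dots> = 0" using ij by (simp add: c_def)
    finally show ?thesis using ij by (intro exI[of _ c]) (auto simp: c_def)
  qed
  then show ?thesis using that by (auto simp: D_def)
qed

lemma exists_annihilating_poly:
  fixes X :: "complex^'n \<Rightarrow> complex^'n"
  assumes X: "clinear_map X"
  obtains p where "p \<noteq> 0" "\<And>v. poly_op p X v = 0"
proof -
  define D where "D = DIM((complex^'n)^'n)"
  define f :: "nat \<Rightarrow> (complex^'n)^'n" where "f i = (\<chi> j. (X ^^ i) (axis j 1))" for i
  obtain c where c: "\<exists>i\<le>D. c i \<noteq> 0" "(\<Sum>i\<le>D. c i *\<^sub>R f i) = 0"
    unfolding D_def by (rule euclidean_family_dependent)
  define p where "p = (\<Sum>i\<le>D. monom (complex_of_real (c i)) i)"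
  have "coeff p k = (if k \<le> D then complex_of_real (c k) else 0)" for k
    by (simp add: p_def coeff_sum coeff_monom)
  then have "p \<noteq> 0" using c(1) by (metis coeff_0 of_real_eq_0_iff)
  have on_basis: "poly_op p X (axis j 1) = 0" for j
  proof -
    have "(\<Sum>i\<le>D. c i *\<^sub>R f i) $ j $ k
        = (\<Sum>i\<le>D. complex_of_real (c i) * (X ^^ i) (axis j 1) $ k)" for k
      by (simp only: sum_component vector_scaleR_component f_def vec_lambda_beta
          scaleR_conv_of_real[where 'a = complex])
    then show ?thesis
      using c(2) by (simp add: p_def poly_op_sum[OF X] poly_op_monom[OF X] vec_eq_iff)
  qed
  have "poly_op p X v = 0" for v
  proof -
    have "poly_op p X v = poly_op p X (\<Sum>j\<in>UNIV. (v $ j) *s axis j 1)" by (simp add: basis_expansion)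
    also have "\<dots> = 0"
      using poly_op_clinear[OF X, of p] by (simp add: clinear_sum clinear_scale on_basis)
    finally show ?thesis .
  qed
  with \<open>p \<noteq> 0\<close> that show ?thesis by blast
qed

lemma poly_op_root_poly_filter_nonzero:
  assumes X: "clinear_map X" and "inj X" and "\<And>v. poly_op (q * root_poly L) X v = 0"
  shows "poly_op (q * root_poly (filter (\<lambda>z. z \<noteq> 0) L)) X v = 0"
  using assms(3)
proof (induction L arbitrary: q v)
  case Nil
  then show ?case by simp
next
  case (Cons z L)
  show ?case
  proof (cases "z = 0")
    case True
    have "X (poly_op (q * root_poly L) X v) = poly_op (q * root_poly (z # L)) X v" for v
      using True by (simp add: poly_op_mult[OF X, symmetric] poly_op_X[OF X, symmetric] algebra_simps)
    then have "poly_op (q * root_poly L) X v = 0" for v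
      using Cons.prems \<open>inj X\<close> clinear_0[OF X] by (metis injD)
    then show ?thesis using Cons.IH True by simp
  next
    case False
    have "poly_op ((q * [:-z, 1:]) * root_poly L) X v = 0" for v
      using Cons.prems by (simp add: algebra_simps)
    then show ?thesis using Cons.IH[of "q * [:-z, 1:]"] False by (simp add: algebra_simps)
  qed
qed

lemma exists_annihilating_root_poly_nonzero:
  fixes X :: "complex^'n \<Rightarrow> complex^'n"
  assumes X: "clinear_map X" and "inj X"
  obtains L where "\<forall>z\<in>set L. z \<noteq> 0" "\<And>v. poly_op (root_poly L) X v = 0"
proof -
  obtain p where "p \<noteq> 0" and p: "\<And>v. poly_op p X v = 0"
    using exists_annihilating_poly[OF X] by blast
  obtain c L where "c \<noteq> 0" and "p = smult c (root_poly L)"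
    by (rule complex_poly_eq_smult_root_poly[OF \<open>p \<noteq> 0\<close>])
  then have "poly_op (1 * root_poly L) X v = 0" for v
    using p[of v] by (simp add: poly_op_smult[OF X])
  then have "poly_op (1 * root_poly (filter (\<lambda>z. z \<noteq> 0) L)) X v = 0" for v
    by (rule poly_op_root_poly_filter_nonzero[OF X \<open>inj X\<close>])
  then show ?thesis using that[of "filter (\<lambda>z. z \<noteq> 0) L"] by simp
qed

lemma poly_op_root_poly_kernel:
  assumes X: "clinear_map X" and F: "clinear_map F" and comm: "\<And>v. F (X v) = X (F v)"
    and eigen: "\<And>z v. z \<in> set L \<Longrightarrow> X v = z *s v \<Longrightarrow> F v = 0 \<Longrightarrow> v = 0"
  shows "poly_op (root_poly L) X v = 0 \<Longrightarrow> F v = 0 \<Longrightarrow> v = 0"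
  using eigen
proof (induction L arbitrary: v)
  case Nil
  then show ?case using poly_op_1[OF X, of v] by simp
next
  case (Cons z L)
  define u where "u = X v - z *s v"
  have "poly_op [:-z, 1:] X v = u" by (simp add: u_def poly_op_pCons[OF X] clinear_0[OF X])
  then have "poly_op (root_poly L) X u = poly_op (root_poly L * [:-z, 1:]) X v"
    by (simp only: poly_op_mult[OF X])
  then have "poly_op (root_poly L) X u = 0" using Cons.prems(1) by (simp add: mult.commute)
  moreover have "F u = 0"
    using Cons.prems(2) by (simp add: u_def clinear_diff[OF F] clinear_scale[OF F] comm clinear_0[OF X])
  ultimately have "u = 0" using Cons.IH Cons.prems(3) by auto
  then show ?case using Cons.prems by (auto simp: u_def)
qed

lemma commuting_involution_eq_id:
  assumes X: "clinear_map X" and E: "clinear_map E"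
    and EE: "\<And>v. E (E v) = v" and EX: "\<And>v. E (X v) = X (E v)"
    and annihilates: "\<And>v. poly_op (root_poly L) X v = 0"
    and eigen: "\<And>z v. z \<in> set L \<Longrightarrow> X v = z *s v \<Longrightarrow> E v = v"
  shows "E v = v"
proof -
  define F where "F v = E v + v" for v
  have F: "clinear_map F" using E by (simp add: F_def clinear_iff vector_add_ldistrib)
  have F_inj: "u = 0" if "F u = 0" for u
  proof (rule poly_op_root_poly_kernel[OF X F _ _ annihilates that])
    show "F (X v) = X (F v)" for v by (simp add: F_def EX clinear_add[OF X])
  next
    fix z v assume "z \<in> set L" "X v = z *s v" "F v = 0"
    then have "2 *s v = 0" using eigen by (simp add: F_def vec_eq_iff)
    then show "v = 0" by simp
  qed
  have "F (E v - v) = 0" by (simp add: F_def clinear_diff[OF E] EE)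
  then have "E v - v = 0" by (rule F_inj)
  then show ?thesis by simp
qed

lemma csqrt_of_real_mult:
  assumes "r \<ge> 0"
  shows "csqrt (complex_of_real r * z) = complex_of_real (sqrt r) * csqrt z"
proof (cases "r = 0")
  case False
  with assms have "r > 0" by simp
  show ?thesis
  proof (rule csqrt_unique)
    show "(complex_of_real (sqrt r) * csqrt z)\<^sup>2 = complex_of_real r * z"
      using assms by (simp add: power_mult_distrib flip: of_real_power)
    show "0 < Re (complex_of_real (sqrt r) * csqrt z)
        \<or> Re (complex_of_real (sqrt r) * csqrt z) = 0 \<and> 0 \<le> Im (complex_of_real (sqrt r) * csqrt z)"
      using csqrt_principal[of z] \<open>r > 0\<close> by auto
  qed
qed simp

lemma cnj_csqrt_inverse_cnj_mult_csqrt: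
  assumes "z \<noteq> 0"
  shows "cnj (csqrt (inverse (cnj z))) * csqrt z = 1"
proof -
  have "inverse (cnj z) = z / (z * cnj z)" using assms by (simp add: field_simps)
  also have "z * cnj z = complex_of_real (norm z ^ 2)" by (rule complex_norm_square[symmetric])
  finally have inv: "inverse (cnj z) = complex_of_real (inverse (norm z ^ 2)) * z"
    by (simp add: divide_inverse mult.commute)
  have "csqrt (inverse (cnj z)) = complex_of_real (inverse (norm z)) * csqrt z"
    unfolding inv by (subst csqrt_of_real_mult) (simp_all add: real_sqrt_inverse)
  then have "cnj (csqrt (inverse (cnj z))) * csqrt z
      = complex_of_real (inverse (norm z)) * (cnj (csqrt z) * csqrt z)"
    by simp
  also have "cnj (csqrt z) * csqrt z = complex_of_real (norm z)"
    using complex_norm_square[of "csqrt z"] by (simp add: mult.commute)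
  finally show ?thesis using assms by (simp flip: of_real_mult)
qed

lemma poly_sqrt_mod_extend:
  fixes g q :: "complex poly"
  assumes "q dvd g * g - [:0, 1:]" "y \<noteq> 0" "poly q y = 0 \<Longrightarrow> poly g y = csqrt y"
  obtains c where "[:-y, 1:] * q dvd (g + [:c:] * q) * (g + [:c:] * q) - [:0, 1:]"
    "poly (g + [:c:] * q) y = csqrt y"
proof -
  obtain s where s: "g * g - [:0, 1:] = q * s" using assms(1) by (auto elim: dvdE)
  define a b \<sigma> where "a = poly q y" and "b = poly g y" and "\<sigma> = poly s y"
  have ab: "b * b - y = a * \<sigma>"
    using arg_cong[OF s, of "\<lambda>p. poly p y"] by (simp add: a_def b_def \<sigma>_def)
  (* If y is not a root of q, c fixes the value of g + c q at y; if it is, g(y) = sqrt y already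
     and c is chosen so that (g + c q)^2 - x vanishes at y to one more order. *)
  define c where "c = (if a \<noteq> 0 then (csqrt y - b) / a else - \<sigma> / (2 * b))"
  define F where "F = s + [:c:] * g + [:c:] * g + [:c:] * [:c:] * q"
  have interpolates: "b + c * a = csqrt y"
    using assms(3) by (auto simp: c_def a_def b_def)
  have "poly F y = 0"
  proof (cases "a = 0")
    case False
    have "a * poly F y = (b + c * a) * (b + c * a) - y"
      using ab by (simp add: F_def a_def b_def \<sigma>_def algebra_simps)
    then show ?thesis using False interpolates by (simp flip: power2_eq_square)
  next
    case True
    then have "b \<noteq> 0" using interpolates \<open>y \<noteq> 0\<close> by simp
    then show ?thesis using True by (simp add: F_def c_def a_def b_def \<sigma>_def field_simps)
  qed
  then have "[:-y, 1:] * q dvd F * q"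
    by (intro mult_dvd_mono) (simp_all add: poly_eq_0_iff_dvd)
  also have "F * q = (g + [:c:] * q) * (g + [:c:] * q) - [:0, 1:]"
    unfolding F_def using s by algebra
  finally show ?thesis
    using interpolates by (intro that[of c]) (simp_all add: a_def b_def)
qed

lemma exists_poly_sqrt_mod:
  assumes "\<forall>z\<in>set L. z \<noteq> 0"
  obtains g where "root_poly L dvd g * g - [:0, 1:]" "\<forall>z\<in>set L. poly g z = csqrt z"
  using assms
proof (induction L arbitrary: thesis)
  case Nil
  show ?case by (rule Nil.prems(1)[of 0]) simp_all
next
  case (Cons y L)
  obtain g where g: "root_poly L dvd g * g - [:0, 1:]" and "\<forall>z\<in>set L. poly g z = csqrt z"
    using Cons by auto
  moreover obtain c where "[:-y, 1:] * root_poly L dvd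
      (g + [:c:] * root_poly L) * (g + [:c:] * root_poly L) - [:0, 1:]"
    and "poly (g + [:c:] * root_poly L) y = csqrt y"
    by (rule poly_sqrt_mod_extend[OF g]) (use Cons.prems \<open>\<forall>z\<in>set L. poly g z = csqrt z\<close>
        poly_root_poly_eq_0_iff in auto)
  ultimately show ?case
    by (intro Cons.prems(1)[of "g + [:c:] * root_poly L"]) (auto simp: poly_root_poly_eq_0_iff)
qed

lemma exists_poly_op_sqrt:
  fixes X :: "complex^'n \<Rightarrow> complex^'n"
  assumes X: "clinear_map X" and "inj X"
  obtains L g where "\<forall>z\<in>set L. z \<noteq> 0" "\<And>v. poly_op (root_poly L) X v = 0"
    "\<And>v. poly_op g X (poly_op g X v) = X v"
    "\<And>z. z \<in> set L \<Longrightarrow> cnj (poly g (inverse (cnj z))) * poly g z = 1"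
proof -
  obtain L where L: "\<forall>z\<in>set L. z \<noteq> 0" and annihilates: "\<And>v. poly_op (root_poly L) X v = 0"
    using exists_annihilating_root_poly_nonzero[OF X \<open>inj X\<close>] by blast
  define L2 where "L2 = L @ map (\<lambda>z. inverse (cnj z)) L"
  have "\<forall>z\<in>set L2. z \<noteq> 0" using L by (auto simp: L2_def)
  then obtain g where g: "root_poly L2 dvd g * g - [:0, 1:]" and g_csqrt: "\<forall>z\<in>set L2. poly g z = csqrt z"
    by (rule exists_poly_sqrt_mod)
  have "root_poly L dvd g * g - [:0, 1:]"
    using g by (auto simp: L2_def intro: dvd_mult_left)
  then have "poly_op (g * g - [:0, 1:]) X v = 0" for v
    by (rule poly_op_eq_0_if_dvd[OF X _ annihilates])
  then have "poly_op g X (poly_op g X v) = X v" for v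
    by (simp add: poly_op_diff[OF X] poly_op_mult[OF X] poly_op_X[OF X])
  moreover have "cnj (poly g (inverse (cnj z))) * poly g z = 1" if "z \<in> set L" for z
    using that L g_csqrt cnj_csqrt_inverse_cnj_mult_csqrt by (auto simp: L2_def)
  ultimately show ?thesis using that L annihilates by blast
qed

lemma poly_op_sqrt_cancel:
  fixes X :: "complex^'n \<Rightarrow> complex^'n"
  assumes A: "antilinear_map A" "inj A"
    and X: "clinear_map X" "bij X" and XAX: "\<And>v. X (A (X v)) = A v"
    and nonzero: "\<forall>z\<in>set L. z \<noteq> 0" and annihilates: "\<And>v. poly_op (root_poly L) X v = 0"
    and sqrt: "\<And>v. poly_op g X (poly_op g X v) = X v"
    and sqrt_inverse: "\<And>z. z \<in> set L \<Longrightarrow> cnj (poly g (inverse (cnj z))) * poly g z = 1"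
  shows "poly_op (map_poly cnj g) (inv X) (poly_op g X v) = v"
proof -
  define Xi where "Xi = inv X"
  have XXi: "X (Xi v) = v" and XiX: "Xi (X v) = v" for v
    using X(2) by (simp_all add: Xi_def bij_is_surj surj_f_inv_f bij_is_inj inv_f_f)
  have Xi: "clinear_map Xi" unfolding Xi_def by (rule clinear_inv[OF X])
  define G where "G = poly_op g X"
  define H where "H = poly_op (map_poly cnj g) Xi"
  have G: "clinear_map G" and H: "clinear_map H"
    unfolding G_def H_def by (simp_all add: poly_op_clinear X Xi)
  have GG: "G (G v) = X v" for v by (simp add: G_def sqrt)
  have XA: "X (A u) = A (Xi u)" for u using XAX[of "Xi u"] by (simp add: XXi)
  have GA: "G (A v) = A (H v)" for v
    unfolding G_def H_def by (rule poly_op_antilinear_intertwine[OF A(1) X(1) Xi XA])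
  have HH: "H (H v) = Xi v" for v
  proof -
    have "A (H (H v)) = G (G (A v))" by (simp add: GA)
    also have "\<dots> = A (Xi v)" by (simp add: GG XA)
    finally show ?thesis using A(2) by (simp add: inj_eq)
  qed
  have GX: "G (X v) = X (G v)" for v
    unfolding G_def by (rule poly_op_commute[OF X(1) X(1)]) (rule refl)
  have HX: "H (X v) = X (H v)" for v
    unfolding H_def by (rule poly_op_commute[OF Xi X(1)]) (simp add: XXi XiX)
  have HG: "H (G v) = G (H v)" for v
    unfolding H_def by (rule poly_op_commute[OF Xi G]) (metis GX XiX XXi)
  have "H (G v) = v"
  proof (rule commuting_involution_eq_id[OF X(1) clinear_comp[OF H G] _ _ annihilates])
    show "H (G (H (G v))) = v" for v by (simp only: HG[symmetric] HH GG XiX)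
    show "H (G (X v)) = X (H (G v))" for v by (simp add: GX HX)
  next
    fix z v assume "z \<in> set L" and eigen: "X v = z *s v"
    with nonzero have "X (inverse z *s v) = v" by (simp add: clinear_scale[OF X(1)] vector_smult_assoc)
    then have "Xi v = inverse z *s v" by (metis XiX)
    from poly_op_eigenvector[OF Xi this] have "H v = cnj (poly g (inverse (cnj z))) *s v"
      unfolding H_def by (simp add: complex_cnj_inverse)
    moreover have "G v = poly g z *s v" unfolding G_def by (rule poly_op_eigenvector[OF X(1) eigen])
    ultimately show "H (G v) = v"
      using sqrt_inverse[OF \<open>z \<in> set L\<close>]
      by (simp add: clinear_scale[OF H] vector_smult_assoc mult.commute)
  qed
  then show ?thesis by (simp add: G_def H_def Xi_def)
qed

lemma exists_unitary_sqrt_commuting_antilinear: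
  fixes X :: "complex^'n \<Rightarrow> complex^'n"
  assumes herm: "hermitian_form l" and A: "antilinear_map A" "inj A"
    and X: "clinear_map X" "inj X" and unitary: "\<And>v w. l (X v) (X w) = l v w"
    and XAX: "\<And>v. X (A (X v)) = A v"
  obtains G where "clinear_map G" "\<forall>v. G (G v) = X v" "\<forall>v w. l (G v) (G w) = l v w"
    "\<forall>v. G (A (G v)) = A v"
proof -
  have "bij X" by (rule clinear_inj_imp_bij[OF X])
  have XXi: "X (inv X v) = v" for v using \<open>bij X\<close> by (simp add: bij_is_surj surj_f_inv_f)
  have Xi: "clinear_map (inv X)" by (rule clinear_inv[OF X(1) \<open>bij X\<close>])
  obtain L g where "\<forall>z\<in>set L. z \<noteq> 0" "\<And>v. poly_op (root_poly L) X v = 0"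
    and sqrt: "\<And>v. poly_op g X (poly_op g X v) = X v"
    and "\<And>z. z \<in> set L \<Longrightarrow> cnj (poly g (inverse (cnj z))) * poly g z = 1"
    using exists_poly_op_sqrt[OF X] by blast
  then have cancel: "poly_op (map_poly cnj g) (inv X) (poly_op g X v) = v" for v
    by (intro poly_op_sqrt_cancel[OF A X(1) \<open>bij X\<close> XAX])
  define G where "G = poly_op g X"
  have G: "clinear_map G" unfolding G_def by (rule poly_op_clinear[OF X(1)])
  have G_unitary: "l (G v) (G w) = l v w" for v w
    using hermitian_form_poly_op_adjoint[OF herm X(1) Xi XXi unitary, of g v "G w"] cancel
    by (simp add: G_def)
  have GAG: "G (A (G v)) = A v" for v
  proof -
    have "X (A u) = A (inv X u)" for u using XAX[of "inv X u"] by (simp add: XXi)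
    then have "G (A (G v)) = A (poly_op (map_poly cnj g) (inv X) (G v))"
      unfolding G_def by (rule poly_op_antilinear_intertwine[OF A(1) X(1) Xi])
    then show ?thesis by (simp add: G_def cancel)
  qed
  have GG: "G (G v) = X v" for v by (simp add: G_def sqrt)
  show ?thesis by (rule that[OF G]) (simp_all add: GG G_unitary GAG)
qed

lemma pair_equiv_trans:
  assumes "pair_equiv l B l' B'" "pair_equiv l' B' l'' B''"
  shows "pair_equiv l B l'' B''"
proof -
  obtain \<phi> \<psi> where "clinear_map \<phi>" "bij \<phi>" "\<And>v w. l' (\<phi> v) (\<phi> w) = l v w"
      "\<And>v. \<phi> (B v) = B' (\<phi> v)"
    and "clinear_map \<psi>" "bij \<psi>" "\<And>v w. l'' (\<psi> v) (\<psi> w) = l' v w"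
      "\<And>v. \<psi> (B' v) = B'' (\<psi> v)"
    using assms unfolding pair_equiv_def by blast
  then show ?thesis
    unfolding pair_equiv_def
    by (intro exI[of _ "\<lambda>v. \<psi> (\<phi> v)"]) (auto simp: clinear_comp bij_comp[unfolded comp_def])
qed

lemma pair_equiv_conj:
  fixes \<phi> :: "complex^'n \<Rightarrow> complex^'m"
  assumes \<phi>: "clinear_map \<phi>" "bij \<phi>" "\<And>v w. l' (\<phi> v) (\<phi> w) = l v w"
    and A': "antilinear_map A'" "l_self_adjoint_anti l' A'"
  defines "C \<equiv> \<lambda>v. inv \<phi> (A' (\<phi> v))"
  shows "antilinear_map C" "l_self_adjoint_anti l C" "pair_equiv l C l' A'"
proof -
  have \<phi>_inv: "\<phi> (inv \<phi> y) = y" for y using \<phi>(2) by (simp add: bij_is_surj surj_f_inv_f)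
  show "antilinear_map C"
    unfolding antilinear_map_def
    by (simp add: C_def clinear_add[OF \<phi>(1)] clinear_scale[OF \<phi>(1)] antilinear_add[OF A'(1)]
        antilinear_scale[OF A'(1)] clinear_add[OF clinear_inv[OF \<phi>(1,2)]]
        clinear_scale[OF clinear_inv[OF \<phi>(1,2)]])
  have "l (inv \<phi> y) w = l' y (\<phi> w)" for y w using \<phi>(3)[of "inv \<phi> y" w] by (simp add: \<phi>_inv)
  then show "l_self_adjoint_anti l C"
    using A'(2) by (simp add: l_self_adjoint_anti_def C_def)
  show "pair_equiv l C l' A'"
    unfolding pair_equiv_def using \<phi> by (auto simp: C_def \<phi>_inv)
qed

lemma unitary_of_equal_squares:
  assumes A: "antilinear_map A" "inj A" "l_self_adjoint_anti l A"
    and C: "antilinear_map C" "l_self_adjoint_anti l C"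
    and CC: "\<And>v. C (C v) = A (A v)"
  defines "U \<equiv> \<lambda>v. C (inv A v)"
  shows "clinear_map U" "inj U" "\<And>v w. l (U v) (U w) = l v w" "\<And>v. U (A (U v)) = A v"
    "\<And>v. U (A v) = C v"
proof -
  have "bij A" by (rule antilinear_inj_imp_bij[OF A(1,2)])
  have AAi: "A (inv A v) = v" and AiA: "inv A (A v) = v" for v
    using \<open>bij A\<close> by (simp_all add: bij_is_surj surj_f_inv_f bij_is_inj inv_f_f)
  have Ai: "antilinear_map (inv A)" by (rule antilinear_inv[OF A(1) \<open>bij A\<close>])
  show "clinear_map U" unfolding clinear_iff
    by (simp add: U_def antilinear_add[OF Ai] antilinear_scale[OF Ai] antilinear_add[OF C(1)]
        antilinear_scale[OF C(1)])
  show "inj U"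
  proof (rule injI)
    fix v w assume "U v = U w"
    then have "C (C (inv A v)) = C (C (inv A w))" by (simp add: U_def)
    then have "A v = A w" by (simp add: CC AAi)
    then show "v = w" using A(2) by (simp add: inj_eq)
  qed
  have A_self: "l (A v) w = l (A w) v" and C_self: "l (C v) w = l (C w) v" for v w
    using A(3) C(2) unfolding l_self_adjoint_anti_def by blast+
  have "l (C x) (C y) = l (A x) (A y)" for x y
  proof -
    have "l (C x) (C y) = l (C (C y)) x" by (rule C_self)
    also have "\<dots> = l (A (A y)) x" by (simp only: CC)
    also have "\<dots> = l (A x) (A y)" by (rule A_self[symmetric])
    finally show ?thesis .
  qed
  then show "l (U v) (U w) = l v w" for v w by (simp add: U_def AAi)
  show "U (A (U v)) = A v" for v by (simp add: U_def AiA CC AAi)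
  show "U (A v) = C v" for v by (simp add: U_def AiA)
qed

lemma pair_equiv_of_equal_squares:
  assumes herm: "hermitian_form l"
    and A: "antilinear_map A" "inj A" "l_self_adjoint_anti l A"
    and C: "antilinear_map C" "l_self_adjoint_anti l C"
    and CC: "\<And>v. C (C v) = A (A v)"
  shows "pair_equiv l A l C"
proof -
  define U where "U v = C (inv A v)" for v
  note U = unitary_of_equal_squares[OF A C CC, folded U_def]
  obtain G where G: "clinear_map G" and GG: "\<forall>v. G (G v) = U v"
    and G_unitary: "\<forall>v w. l (G v) (G w) = l v w" and GAG: "\<forall>v. G (A (G v)) = A v"
    by (rule exists_unitary_sqrt_commuting_antilinear[of l A U, OF herm A(1,2) U(1-4)])
  have "inj G"
  proof (rule injI)
    fix v w assume "G v = G w"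
    then have "G (G v) = G (G w)" by simp
    then have "U v = U w" using GG by simp
    then show "v = w" using U(2) by (simp add: inj_eq)
  qed
  have "G (A v) = C (G v)" for v
  proof -
    have "G (A v) = G (G (A (G v)))" using GAG by simp
    also have "\<dots> = U (A (G v))" using GG by simp
    also have "\<dots> = C (G v)" by (rule U(5))
    finally show ?thesis .
  qed
  then show ?thesis
    unfolding pair_equiv_def using G clinear_inj_imp_bij[OF G \<open>inj G\<close>] G_unitary by blast
qed

theorem mainTheorem2:
  fixes l l' :: "complex ^ 'n \<Rightarrow> complex ^ 'n \<Rightarrow> complex"
    and A A' :: "complex ^ 'n \<Rightarrow> complex ^ 'n"
  assumes "hermitian_form l" "nondegenerate l"
    and "hermitian_form l'" "nondegenerate l'"
    and "antilinear_map A" "nonsingular A" "l_self_adjoint_anti l A"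
    and "antilinear_map A'" "nonsingular A'" "l_self_adjoint_anti l' A'"
    and "pair_equiv l (A \<circ> A) l' (A' \<circ> A')"
  shows "pair_equiv l A l' A'"
proof -
  obtain \<phi> where \<phi>: "clinear_map \<phi>" "bij \<phi>" "\<And>v w. l' (\<phi> v) (\<phi> w) = l v w"
    and \<phi>_squares: "\<And>v. \<phi> (A (A v)) = A' (A' (\<phi> v))"
    using assms(11) unfolding pair_equiv_def by auto
  define C where "C = (\<lambda>v. inv \<phi> (A' (\<phi> v)))"
  note C = pair_equiv_conj[OF \<phi> assms(8,10), folded C_def]
  have "C (C v) = A (A v)" for v
  proof -
    have "C (C v) = inv \<phi> (A' (A' (\<phi> v)))" using \<phi>(2) by (simp add: C_def bij_is_surj surj_f_inv_f)
    also have "\<dots> = A (A v)" using \<phi>(2) by (simp add: bij_is_inj inv_f_f flip: \<phi>_squares)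
    finally show ?thesis .
  qed
  then have "pair_equiv l A l C"
    using antilinear_nonsingular_imp_inj[OF assms(5,6)]
    by (intro pair_equiv_of_equal_squares[OF assms(1,5)] assms(7) C(1,2))
  then show ?thesis using C(3) by (rule pair_equiv_trans)
qed

end
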